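(* For any $n$-node graph $G$ and any $r\in\mathbb{N}$, the existence of an $r$-cycle in $G$ can be detected within $\lfloor (r-1)/2\rfloor+\mathcal{O}(\log n/\log\log n)$ rounds of the $\mathsf{HYBRID}$ model.
   Context: Distributed setting: $n$ nodes with unique IDs in $\{1,\dots,n\}$; local communication graph $G$ undirected; each node initially knows only its neighbors' IDs; synchronous rounds, unlimited local computation. In the $\mathsf{HYBRID}$ model, in every round each node may send a message of arbitrary size to each neighbor (local mode) and may additionally send and receive $\mathcal{O}(\log n)$-bit messages to/from up to $\mathcal{O}(\log n)$ arbitrary nodes (global mode); excess messages are dropped arbitrarily. An $r$-cycle is a cycle of length $r$; detection means every node learns whether $G$ contains an $r$-cycle. *)

theory Defs
  imports Main "HOL-Library.Landau_Symbols"
begin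

definition simple_graph :: "nat \<Rightarrow> (nat \<Rightarrow> nat \<Rightarrow> bool) \<Rightarrow> bool" where
  "simple_graph n E \<longleftrightarrow>
     (\<forall>u v. E u v \<longrightarrow> E v u) \<and> (\<forall>u. \<not> E u u) \<and>
     (\<forall>u v. E u v \<longrightarrow> u \<in> {1..n} \<and> v \<in> {1..n})"

definition has_cycle :: "nat \<Rightarrow> (nat \<Rightarrow> nat \<Rightarrow> bool) \<Rightarrow> nat \<Rightarrow> bool" where
  "has_cycle n E r \<longleftrightarrow>
     (\<exists>vs. length vs = r \<and> 3 \<le> r \<and> distinct vs \<and> set vs \<subseteq> {1..n} \<and>
           (\<forall>i<r. E (vs ! i) (vs ! ((i + 1) mod r))))"

text \<open>Local states and local messages are encoded
  as natural numbers (unbounded size). Global messages are bit strings.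
  a_init n id nbrs: initial state of node id (knows n, its ID, its neighbours' IDs).
  a_lsend s w: local message sent to neighbour w.
  a_gsend s: list of global messages (target ID, bits).
  a_step s L G: new state from local messages L (L u = Some m iff u is a neighbour)
    and the set G of delivered global messages (sender ID, bits).
  a_out s: current output (None = undecided).\<close>
record hybrid_alg =
  a_init  :: "nat \<Rightarrow> nat \<Rightarrow> nat set \<Rightarrow> nat"
  a_lsend :: "nat \<Rightarrow> nat \<Rightarrow> nat"
  a_gsend :: "nat \<Rightarrow> (nat \<times> bool list) list"
  a_step  :: "nat \<Rightarrow> (nat \<Rightarrow> nat option) \<Rightarrow> (nat \<times> bool list) set \<Rightarrow> nat"
  a_out   :: "nat \<Rightarrow> bool option"

definition cap :: "nat \<Rightarrow> nat \<Rightarrow> nat" where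
  "cap c n = c * (nat \<lceil>log 2 (real n)\<rceil> + 1)"

definition sent :: "hybrid_alg \<Rightarrow> nat \<Rightarrow> (nat \<Rightarrow> nat) \<Rightarrow> nat \<Rightarrow> (nat \<times> bool list) set" where
  "sent A n s v = {(u, m). u \<in> {1..n} \<and> (v, m) \<in> set (a_gsend A (s u))}"

text \<open>Adversary dropping excess global messages arbitrarily: adv t v S is the set of
  messages delivered to v in round t out of the set S sent to v.\<close>
definition valid_adv :: "nat \<Rightarrow> (nat \<Rightarrow> nat \<Rightarrow> (nat \<times> bool list) set \<Rightarrow> (nat \<times> bool list) set) \<Rightarrow> bool" where
  "valid_adv k adv \<longleftrightarrow>
     (\<forall>t v S. finite S \<longrightarrow> adv t v S \<subseteq> S \<and>
        (card S \<le> k \<longrightarrow> adv t v S = S) \<and> (k < card S \<longrightarrow> card (adv t v S) = k))"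

primrec run :: "hybrid_alg \<Rightarrow> nat \<Rightarrow> (nat \<Rightarrow> nat \<Rightarrow> bool) \<Rightarrow>
    (nat \<Rightarrow> nat \<Rightarrow> (nat \<times> bool list) set \<Rightarrow> (nat \<times> bool list) set) \<Rightarrow> nat \<Rightarrow> nat \<Rightarrow> nat" where
  "run A n E adv 0 = (\<lambda>v. a_init A n v {u. E v u})"
| "run A n E adv (Suc t) =
     (let s = run A n E adv t in
      (\<lambda>v. a_step A (s v) (\<lambda>u. if E u v then Some (a_lsend A (s u) v) else None)
                 (adv t v (sent A n s v))))"

end

theory Submission
  imports Defs "HOL-Library.Countable" "HOL-Real_Asymp.Real_Asymp"
begin

text \<open>
  Every node floods its incident edges through the local network for (r - 1) div 2 rounds. If
  vs is an r-cycle, every edge of it has an endpoint within distance (r - 1) div 2 of vs ! 0 along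
  the cycle, so vs ! 0 then knows the whole cycle and accepts; conversely, nodes only ever accept
  on genuine cycles. Acceptance is then spread through the global network along a d-ary tree on
  the node indices, with d = \<lceil>log 2 n\<rceil> + 1 and depth D \<approx> ln n / ln ln n chosen
  so that n \<le> d ^ D: for D rounds every accepting node signals its parent, which brings the
  root to accept, and for D more rounds every accepting node signals its children. Each node sends
  at most d empty messages per round, and an admissible adversary never drops all messages
  addressed to a node, so a node accepts in the round after any message is addressed to it.
\<close>

section \<open>Arity and depth of the broadcast tree\<close>

definition tree_arity :: "nat \<Rightarrow> nat" where
  "tree_arity n = nat \<lceil>log 2 (real n)\<rceil> + 1"

text \<open>For small n the formula is junk (ln (ln n) \<le> 0 for n \<le> 2); all that matters there is
  n \<le> tree_arity n ^ tree_depth n.\<close>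

definition tree_depth :: "nat \<Rightarrow> nat" where
  "tree_depth n = (if n < 4 then n else nat \<lceil>ln (real n) / ln (ln (real n))\<rceil>)"

lemma cap_1_eq_tree_arity: "cap 1 n = tree_arity n"
  by (simp add: cap_def tree_arity_def)

lemma tree_arity_pos: "0 < tree_arity n"
  by (simp add: tree_arity_def)

lemma one_less_ln: "4 \<le> n \<Longrightarrow> 1 < ln (real n)"
  using exp_le ln_less_cancel_iff[of "exp 1" "real n"] by simp

lemma le_tree_arity_pow_depth: "n \<le> tree_arity n ^ tree_depth n"
proof (cases "n < 4")
  case small: True
  show ?thesis
  proof (cases "n \<le> 1")
    case True
    then show ?thesis
      using tree_arity_pos[of n] by (cases n) (auto simp: tree_depth_def)
  next
    case False
    then have "1 \<le> log 2 (real n)"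
      by simp
    then have "2 \<le> tree_arity n"
      unfolding tree_arity_def by linarith
    then have "2 ^ n \<le> tree_arity n ^ n"
      by (rule power_mono) simp
    with less_exp[of n] have "n \<le> tree_arity n ^ n"
      by linarith
    with small show ?thesis
      unfolding tree_depth_def by simp
  qed
next
  case False
  define L where "L = ln (real n)"
  have L: "1 < L"
    using False one_less_ln unfolding L_def by simp
  have "L \<le> log 2 (real n)"
    using L ln_2_less_1 by (simp add: L_def log_def le_divide_eq)
  then have arity: "L \<le> real (tree_arity n)"
    unfolding tree_arity_def by linarith
  have depth: "L / ln L \<le> real (tree_depth n)"
    using False real_nat_ceiling_ge unfolding tree_depth_def L_def by simp
  have "real n = exp (ln L * (L / ln L))"
    using L False by (simp add: L_def)
  also have "\<dots> = L powr (L / ln L)"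
    using L by (simp add: powr_def)
  also have "\<dots> \<le> L powr real (tree_depth n)"
    using L depth by (intro powr_mono) auto
  also have "\<dots> \<le> real (tree_arity n) ^ tree_depth n"
    using L arity by (simp add: powr_realpow power_mono)
  finally show ?thesis
    by (simp flip: of_nat_power)
qed

lemma tree_depth_le_ln_div_ln_ln: "4 \<le> n \<Longrightarrow> real (tree_depth n) \<le> ln (real n) / ln (ln (real n)) + 1"
  using one_less_ln[of n] of_int_ceiling_le_add_one[of "ln (real n) / ln (ln (real n))"]
  by (simp add: tree_depth_def)

lemma tree_depth_bigo: "(\<lambda>n. real (tree_depth n)) \<in> O(\<lambda>n. ln (real n) / ln (ln (real n)))"
proof -
  have "eventually (\<lambda>n. norm (real (tree_depth n)) \<le> norm (ln (real n) / ln (ln (real n)) + 1)) at_top"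
    using eventually_ge_at_top[of 4]
  proof eventually_elim
    case (elim n)
    then show ?case
      using tree_depth_le_ln_div_ln_ln[of n] one_less_ln[of n] by simp
  qed
  then have "(\<lambda>n. real (tree_depth n)) \<in> O(\<lambda>n. ln (real n) / ln (ln (real n)) + 1)"
    by (rule landau_o.big_mono)
  also have "(\<lambda>n::nat. ln (real n) / ln (ln (real n)) + 1) \<in> O(\<lambda>n. ln (real n) / ln (ln (real n)))"
    by real_asymp
  finally show ?thesis .
qed

text \<open>Rounding x down to a multiple of d ^ g gives its ancestor at height g in the d-ary tree on
  the naturals rooted at 0.\<close>

definition tree_ancestor :: "nat \<Rightarrow> nat \<Rightarrow> nat \<Rightarrow> nat" where
  "tree_ancestor d g x = d ^ g * (x div d ^ g)"

lemma tree_ancestor_0 [simp]: "tree_ancestor d 0 x = x"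
  by (simp add: tree_ancestor_def)

lemma tree_ancestor_le: "tree_ancestor d g x \<le> x"
  by (simp add: tree_ancestor_def times_div_less_eq_dividend)

lemma tree_ancestor_eq_0: "x < d ^ g \<Longrightarrow> tree_ancestor d g x = 0"
  by (simp add: tree_ancestor_def)

lemma div_pow_Suc: "(x::nat) div d ^ Suc g = x div d ^ g div d"
  by (simp add: div_mult2_eq mult.commute[of d])

lemma tree_ancestor_Suc_tree_ancestor:
  "tree_ancestor d (Suc g) (tree_ancestor d g x) = tree_ancestor d (Suc g) x"
proof (cases "d = 0")
  case False
  then have "d ^ g * (x div d ^ g) div d ^ Suc g = x div d ^ Suc g"
    by (simp only: div_pow_Suc) simp
  then show ?thesis
    by (simp only: tree_ancestor_def)
qed (simp add: tree_ancestor_def)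

lemma tree_ancestor_eq_Suc_plus_digit:
  "tree_ancestor d g x = tree_ancestor d (Suc g) x + (x div d ^ g mod d) * d ^ g"
proof -
  have "x div d ^ g = d * (x div d ^ g div d) + x div d ^ g mod d"
    by simp
  then show ?thesis
    unfolding tree_ancestor_def div_pow_Suc
    by (metis add_mult_distrib2 mult.assoc mult.commute power_Suc2)
qed

section \<open>Walks and cycles\<close>

abbreviation radius :: "nat \<Rightarrow> nat" where
  "radius r \<equiv> (r - 1) div 2"

primrec reach :: "('a \<Rightarrow> 'a \<Rightarrow> bool) \<Rightarrow> nat \<Rightarrow> 'a \<Rightarrow> 'a set" where
  "reach E 0 v = {v}"
| "reach E (Suc t) v = reach E t v \<union> (\<Union>u\<in>{u. E u v}. reach E t u)"

lemma reach_mono: "t \<le> t' \<Longrightarrow> reach E t v \<subseteq> reach E t' v"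
  by (rule lift_Suc_mono_le[of "\<lambda>t. reach E t v"]) auto

lemma walk_in_reach: "(\<forall>j<k. E (f j) (f (Suc j))) \<Longrightarrow> f 0 \<in> reach E k (f k)"
  by (induction k) auto

lemma cycle_vertex_in_reach_forward:
  assumes "symp E"
    and cycle: "\<forall>i<r. E (vs ! i) (vs ! ((i + 1) mod r))" and "i < r"
  shows "vs ! i \<in> reach E i (vs ! 0)"
proof -
  have "E (vs ! (i - j)) (vs ! (i - Suc j))" if "j < i" for j
  proof -
    have "(i - Suc j + 1) mod r = i - j"
      using that \<open>i < r\<close> by simp
    then show ?thesis
      using \<open>symp E\<close> cycle[rule_format, of "i - Suc j"] \<open>i < r\<close> by (simp add: sympD)
  qed
  then show ?thesis
    using walk_in_reach[of i E "\<lambda>j. vs ! (i - j)"] by simp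
qed

lemma cycle_vertex_in_reach_backward:
  assumes cycle: "\<forall>i<r. E (vs ! i) (vs ! ((i + 1) mod r))" and "i \<le> r"
  shows "vs ! (i mod r) \<in> reach E (r - i) (vs ! 0)"
proof -
  have "E (vs ! ((i + j) mod r)) (vs ! ((i + Suc j) mod r))" if "j < r - i" for j
    using cycle[rule_format, of "(i + j) mod r"] that by (simp add: mod_Suc_eq)
  then show ?thesis
    using walk_in_reach[of "r - i" E "\<lambda>j. vs ! ((i + j) mod r)"] \<open>i \<le> r\<close> by simp
qed

lemma cycle_edge_within_radius:
  assumes "symp E"
    and cycle: "\<forall>i<r. E (vs ! i) (vs ! ((i + 1) mod r))" and "i < r"
  shows "vs ! i \<in> reach E (radius r) (vs ! 0) \<or> vs ! ((i + 1) mod r) \<in> reach E (radius r) (vs ! 0)"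
proof (cases "i \<le> radius r")
  case True
  then show ?thesis
    using cycle_vertex_in_reach_forward[OF \<open>symp E\<close> cycle \<open>i < r\<close>] reach_mono[OF True, of E]
    by blast
next
  case False
  then have near: "r - (i + 1) \<le> radius r"
    by presburger
  have "vs ! ((i + 1) mod r) \<in> reach E (r - (i + 1)) (vs ! 0)"
    using cycle_vertex_in_reach_backward[OF cycle, of "i + 1"] \<open>i < r\<close> by simp
  then show ?thesis
    using reach_mono[OF near, of E] by blast
qed

lemma has_cycle_mono:
  "has_cycle n E' r \<Longrightarrow> (\<And>a b. E' a b \<Longrightarrow> E a b) \<Longrightarrow> has_cycle n E r"
  unfolding has_cycle_def by blast

section \<open>The detection algorithm\<close>

datatype node_state =
  Node_State (node_id: nat) (num_nodes: nat) (clock: nat) (known: "(nat \<times> nat) list") (accepted: bool)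

instance node_state :: countable
  by countable_datatype

definition known_graph :: "(nat \<times> nat) list \<Rightarrow> nat \<Rightarrow> nat \<Rightarrow> bool" where
  "known_graph K a b \<longleftrightarrow> (a, b) \<in> set K \<or> (b, a) \<in> set K"

definition init_state :: "nat \<Rightarrow> nat \<Rightarrow> nat set \<Rightarrow> node_state" where
  "init_state n v N = Node_State v n 0 (map (Pair v) (sorted_list_of_set N)) False"

definition next_state ::
    "nat \<Rightarrow> node_state \<Rightarrow> (nat \<Rightarrow> (nat \<times> nat) list option) \<Rightarrow> (nat \<times> bool list) set \<Rightarrow>
     node_state" where
  "next_state r s L G =
     (let K = known s @ concat (map (case_option [] id \<circ> L) [1..<Suc (num_nodes s)])
      in Node_State (node_id s) (num_nodes s) (Suc (clock s)) K
           (accepted s \<or> has_cycle (num_nodes s) (known_graph K) r \<or> G \<noteq> {}))"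

text \<open>Node v sits at index v - 1 of the tree. Global messages are empty: only their arrival
  carries information.\<close>

definition outbox :: "nat \<Rightarrow> node_state \<Rightarrow> (nat \<times> bool list) list" where
  "outbox r s =
     (let x = node_id s - 1; d = tree_arity (num_nodes s); D = tree_depth (num_nodes s);
          g = clock s - radius r
      in if \<not> accepted s \<or> clock s < radius r then []
         else if g < D then [(tree_ancestor d (Suc g) x + 1, [])]
         else if g < 2 * D then map (\<lambda>i. (x + i * d ^ (2 * D - Suc g) + 1, [])) [1..<d]
         else [])"

definition detector :: "nat \<Rightarrow> hybrid_alg" where
  "detector r =
     \<lparr>a_init = \<lambda>n v N. to_nat (init_state n v N),
      a_lsend = \<lambda>s w. to_nat (known (from_nat s)),
      a_gsend = \<lambda>s. outbox r (from_nat s),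
      a_step = \<lambda>s L G. to_nat (next_state r (from_nat s) (map_option from_nat \<circ> L) G),
      a_out = \<lambda>s. Some (accepted (from_nat s))\<rparr>"

lemma length_outbox_le: "length (outbox r s) \<le> tree_arity (num_nodes s)"
  using tree_arity_pos[of "num_nodes s"] by (simp add: outbox_def Let_def)

lemma mem_outboxD: "(w, m) \<in> set (outbox r s) \<Longrightarrow> accepted s \<and> m = []"
  by (auto simp: outbox_def Let_def split: if_splits)

lemma parent_in_outbox:
  assumes "accepted s" and "clock s = radius r + g" and "g < tree_depth (num_nodes s)"
  shows "(tree_ancestor (tree_arity (num_nodes s)) (Suc g) (node_id s - 1) + 1, []) \<in> set (outbox r s)"
  using assms by (simp add: outbox_def)

lemma child_in_outbox:
  assumes "accepted s" and "clock s = radius r + D + k" and "k < D" and "0 < i" and "i < d"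
    and "D = tree_depth (num_nodes s)" and "d = tree_arity (num_nodes s)"
  shows "(node_id s - 1 + i * d ^ (D - Suc k) + 1, []) \<in> set (outbox r s)"
proof -
  have "2 * D - Suc (clock s - radius r) = D - Suc k"
    using assms(2,3) by simp
  then show ?thesis
    using assms by (auto simp: outbox_def Let_def)
qed

section \<open>Executions of the algorithm\<close>

lemma valid_adv_eq_empty_iff:
  assumes "valid_adv k adv" and "0 < k" and "finite S"
  shows "adv t v S = {} \<longleftrightarrow> S = {}"
proof -
  have "adv t v S \<subseteq> S" and "card S \<le> k \<Longrightarrow> adv t v S = S"
    and "k < card S \<Longrightarrow> card (adv t v S) = k"
    using assms(1,3) by (simp_all add: valid_adv_def)
  with \<open>0 < k\<close> show ?thesis
    by (cases "card S \<le> k") auto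
qed

lemma finite_sent: "finite (sent A n s v)"
proof -
  have "sent A n s v \<subseteq> (\<Union>u\<in>{1..n}. {u} \<times> snd ` set (a_gsend A (s u)))"
    unfolding sent_def by (auto simp: image_iff) (metis snd_conv)
  then show ?thesis
    by (rule finite_subset) auto
qed

locale detector_run =
  fixes r n :: nat and E :: "nat \<Rightarrow> nat \<Rightarrow> bool"
    and adv :: "nat \<Rightarrow> nat \<Rightarrow> (nat \<times> bool list) set \<Rightarrow> (nat \<times> bool list) set"
  assumes graph: "simple_graph n E" and adversary: "valid_adv (tree_arity n) adv"
begin

definition state :: "nat \<Rightarrow> nat \<Rightarrow> node_state" where
  "state t v = from_nat (run (detector r) n E adv t v)"

abbreviation known_at :: "nat \<Rightarrow> nat \<Rightarrow> (nat \<times> nat) list" where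
  "known_at t v \<equiv> known (state t v)"

abbreviation accepted_at :: "nat \<Rightarrow> nat \<Rightarrow> bool" where
  "accepted_at t v \<equiv> accepted (state t v)"

definition inbox :: "nat \<Rightarrow> nat \<Rightarrow> (nat \<times> bool list) set" where
  "inbox t v = sent (detector r) n (run (detector r) n E adv t) v"

lemma symp_E: "symp E"
  using graph by (auto simp: simple_graph_def intro: sympI)

lemma E_in_range: "E u v \<Longrightarrow> u \<in> {1..n} \<and> v \<in> {1..n}"
  using graph by (simp add: simple_graph_def)

lemma a_gsend_run: "a_gsend (detector r) (run (detector r) n E adv t v) = outbox r (state t v)"
  by (simp add: detector_def state_def)

lemma a_out_run: "a_out (detector r) (run (detector r) n E adv t v) = Some (accepted_at t v)"
  by (simp add: detector_def state_def)

lemma inbox_eq: "inbox t v = {(u, m). u \<in> {1..n} \<and> (v, m) \<in> set (outbox r (state t u))}"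
  by (simp add: inbox_def sent_def a_gsend_run)

lemma state_0: "state 0 v = init_state n v {u. E v u}"
  by (simp add: state_def detector_def)

lemma state_Suc:
  "state (Suc t) v =
     next_state r (state t v) (\<lambda>u. if E u v then Some (known_at t u) else None) (adv t v (inbox t v))"
proof -
  have step: "a_step (detector r) s L G = to_nat (next_state r (from_nat s) (map_option from_nat \<circ> L) G)"
    for s L G
    by (simp add: detector_def)
  have local_msgs: "map_option from_nat \<circ>
      (\<lambda>u. if E u v then Some (a_lsend (detector r) (run (detector r) n E adv t u) v) else None) =
    (\<lambda>u. if E u v then Some (known_at t u) else None)"
    by (rule ext) (simp add: detector_def state_def)
  show ?thesis
    unfolding state_def[of "Suc t"] run.simps Let_def step from_nat_to_nat local_msgs
    by (simp add: state_def inbox_def)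
qed

lemma state_fields: "node_id (state t v) = v \<and> num_nodes (state t v) = n \<and> clock (state t v) = t"
  by (induction t) (simp_all add: state_0 state_Suc init_state_def next_state_def Let_def)

lemma accepted_at_0: "\<not> accepted_at 0 v"
  by (simp add: state_0 init_state_def)

lemma known_at_Suc:
  "known_at (Suc t) v = known_at t v @ concat (map (\<lambda>u. if E u v then known_at t u else []) [1..<Suc n])"
proof -
  have "(case_option [] id \<circ> (\<lambda>u. if E u v then Some (known_at t u) else None)) =
      (\<lambda>u. if E u v then known_at t u else [])"
    by (simp add: fun_eq_iff)
  then show ?thesis
    by (simp add: state_Suc next_state_def Let_def state_fields)
qed

lemma accepted_at_Suc:
  "accepted_at (Suc t) v \<longleftrightarrow>
     accepted_at t v \<or> has_cycle n (known_graph (known_at (Suc t) v)) r \<or> inbox t v \<noteq> {}"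
proof -
  have "adv t v (inbox t v) = {} \<longleftrightarrow> inbox t v = {}"
    unfolding inbox_def using adversary tree_arity_pos finite_sent by (rule valid_adv_eq_empty_iff)
  then show ?thesis
    by (simp add: state_Suc next_state_def Let_def state_fields)
qed

lemma set_known_at: "set (known_at t v) = {(a, b). E a b \<and> a \<in> reach E t v}"
proof (induction t arbitrary: v)
  case 0
  have "finite {u. E v u}"
    using E_in_range by (auto intro: finite_subset[of _ "{1..n}"])
  then show ?case
    by (auto simp: state_0 init_state_def)
next
  case (Suc t)
  have "set (known_at (Suc t) v) = set (known_at t v) \<union> (\<Union>u\<in>{u. E u v}. set (known_at t u))"
    using E_in_range by (fastforce simp: known_at_Suc)
  with Suc show ?case
    by auto
qed

lemma known_graph_known_at: "known_graph (known_at t v) a b \<Longrightarrow> E a b"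
  using symp_E by (auto simp: known_graph_def set_known_at dest: sympD)

lemma accepted_at_imp_has_cycle: "accepted_at t v \<Longrightarrow> has_cycle n E r"
proof (induction t arbitrary: v)
  case 0
  then show ?case
    by (simp add: accepted_at_0)
next
  case (Suc t)
  then consider "accepted_at t v" | "has_cycle n (known_graph (known_at (Suc t) v)) r" | "inbox t v \<noteq> {}"
    by (auto simp: accepted_at_Suc)
  then show ?case
  proof cases
    case 2
    then show ?thesis
      using known_graph_known_at by (rule has_cycle_mono)
  next
    case 3
    then obtain u m where "(v, m) \<in> set (outbox r (state t u))"
      by (auto simp: inbox_eq)
    then show ?thesis
      using Suc.IH mem_outboxD by blast
  qed (rule Suc.IH)
qed

lemma accepted_at_mono: "accepted_at t v \<Longrightarrow> t \<le> t' \<Longrightarrow> accepted_at t' v"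
  using lift_Suc_mono_le[of "\<lambda>t. accepted_at t v" t t'] by (auto simp: accepted_at_Suc)

lemma signalled_imp_accepted_at_Suc:
  "u \<in> {1..n} \<Longrightarrow> (w, m) \<in> set (outbox r (state t u)) \<Longrightarrow> accepted_at (Suc t) w"
  by (auto simp: accepted_at_Suc inbox_eq)

lemma has_cycle_imp_accepted_at_radius:
  assumes "has_cycle n E r"
  shows "\<exists>w\<in>{1..n}. accepted_at (radius r) w"
proof -
  obtain vs where vs: "length vs = r" "3 \<le> r" "distinct vs" "set vs \<subseteq> {1..n}"
    and cycle: "\<forall>i<r. E (vs ! i) (vs ! ((i + 1) mod r))"
    using assms unfolding has_cycle_def by blast
  have "known_graph (known_at (radius r) (vs ! 0)) (vs ! i) (vs ! ((i + 1) mod r))" if "i < r" for i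
    using cycle_edge_within_radius[OF symp_E cycle that] cycle that symp_E
    by (auto simp: known_graph_def set_known_at dest: sympD)
  then have "has_cycle n (known_graph (known_at (radius r) (vs ! 0))) r"
    using vs unfolding has_cycle_def by blast
  moreover have "radius r = Suc (radius r - 1)"
    using \<open>3 \<le> r\<close> by simp
  ultimately have "accepted_at (radius r) (vs ! 0)"
    by (metis accepted_at_Suc)
  moreover have "vs ! 0 \<in> set vs"
    using vs(1,2) by (intro nth_mem) simp
  ultimately show ?thesis
    using vs(4) by blast
qed

lemma accepted_at_tree_ancestor:
  assumes "accepted_at (radius r) (y + 1)" and "y < n" and "g \<le> tree_depth n"
  shows "accepted_at (radius r + g) (tree_ancestor (tree_arity n) g y + 1)"
  using \<open>g \<le> tree_depth n\<close>
proof (induction g)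
  case 0
  then show ?case
    using assms(1) by simp
next
  case (Suc g)
  define x where "x = tree_ancestor (tree_arity n) g y"
  have "x < n"
    using tree_ancestor_le[of "tree_arity n" g y] \<open>y < n\<close> unfolding x_def by linarith
  have "accepted_at (radius r + g) (x + 1)"
    using Suc unfolding x_def by simp
  then have "(tree_ancestor (tree_arity n) (Suc g) x + 1, []) \<in> set (outbox r (state (radius r + g) (x + 1)))"
    using Suc.prems parent_in_outbox[of "state (radius r + g) (x + 1)" r g] by (simp add: state_fields)
  then have "accepted_at (Suc (radius r + g)) (tree_ancestor (tree_arity n) (Suc g) x + 1)"
    using \<open>x < n\<close> by (intro signalled_imp_accepted_at_Suc) auto
  then show ?case
    by (simp add: x_def tree_ancestor_Suc_tree_ancestor)
qed

lemma accepted_at_tree_descendant: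
  assumes root: "accepted_at (radius r + tree_depth n) 1" and "y < n" and "k \<le> tree_depth n"
  shows "accepted_at (radius r + tree_depth n + k) (tree_ancestor (tree_arity n) (tree_depth n - k) y + 1)"
  using \<open>k \<le> tree_depth n\<close>
proof (induction k)
  case 0
  have "y < tree_arity n ^ tree_depth n"
    using \<open>y < n\<close> le_tree_arity_pow_depth[of n] by linarith
  then show ?case
    using root by (simp add: tree_ancestor_eq_0)
next
  case (Suc k)
  define d where "d = tree_arity n"
  define e where "e = tree_depth n - Suc k"
  define x where "x = tree_ancestor d (Suc e) y"
  define i where "i = y div d ^ e mod d"
  have target: "tree_ancestor d e y = x + i * d ^ e"
    unfolding x_def i_def by (rule tree_ancestor_eq_Suc_plus_digit)
  have "Suc e = tree_depth n - k"
    using Suc.prems unfolding e_def by simp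
  then have x_acc: "accepted_at (radius r + tree_depth n + k) (x + 1)"
    using Suc unfolding x_def d_def by simp
  show ?case
  proof (cases "i = 0")
    case True
    then show ?thesis
      using accepted_at_mono[OF x_acc] target by (simp add: d_def e_def)
  next
    case False
    have "i < d"
      unfolding i_def using tree_arity_pos[of n] by (simp add: d_def)
    with False x_acc Suc.prems
    have "(x + i * d ^ e + 1, []) \<in> set (outbox r (state (radius r + tree_depth n + k) (x + 1)))"
      using child_in_outbox[of "state (radius r + tree_depth n + k) (x + 1)" r "tree_depth n" k i d]
      by (simp add: state_fields d_def e_def)
    moreover have "x < n"
      using tree_ancestor_le[of d "Suc e" y] \<open>y < n\<close> unfolding x_def by linarith
    ultimately have "accepted_at (Suc (radius r + tree_depth n + k)) (x + i * d ^ e + 1)"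
      by (intro signalled_imp_accepted_at_Suc[of "x + 1"]) auto
    then show ?thesis
      using target by (simp add: d_def e_def)
  qed
qed

lemma accepted_at_final_iff:
  assumes "v \<in> {1..n}"
  shows "accepted_at (radius r + 2 * tree_depth n) v \<longleftrightarrow> has_cycle n E r"
proof
  assume "has_cycle n E r"
  then obtain w where w: "w \<in> {1..n}" "accepted_at (radius r) w"
    using has_cycle_imp_accepted_at_radius by blast
  have "w - 1 < n"
    using w(1) by auto
  moreover from this have "w - 1 < tree_arity n ^ tree_depth n"
    using le_tree_arity_pow_depth[of n] by linarith
  ultimately have "accepted_at (radius r + tree_depth n) 1"
    using w accepted_at_tree_ancestor[of "w - 1" "tree_depth n"] by (simp add: tree_ancestor_eq_0)
  moreover have "v - 1 < n"
    using assms by auto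
  ultimately have "accepted_at (radius r + tree_depth n + tree_depth n) (v - 1 + 1)"
    using accepted_at_tree_descendant[of "v - 1" "tree_depth n"] by simp
  then show "accepted_at (radius r + 2 * tree_depth n) v"
    using assms by (simp add: mult_2 add.assoc)
qed (rule accepted_at_imp_has_cycle)

end

lemma detector_correct:
  assumes "simple_graph n E" and "valid_adv (cap 1 n) adv"
  shows "(\<forall>t. \<forall>u\<in>{1..n}.
            length (a_gsend (detector r) (run (detector r) n E adv t u)) \<le> cap 1 n \<and>
            (\<forall>(w, m) \<in> set (a_gsend (detector r) (run (detector r) n E adv t u)).
               length m \<le> cap 1 n)) \<and>
         (\<forall>v\<in>{1..n}.
            a_out (detector r) (run (detector r) n E adv (radius r + 2 * tree_depth n) v) =
              Some (has_cycle n E r))"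
proof -
  interpret detector_run r n E adv
    using assms unfolding cap_1_eq_tree_arity by unfold_locales
  have "length (outbox r (state t u)) \<le> tree_arity n" for t u
    using length_outbox_le[of r "state t u"] by (simp add: state_fields)
  moreover have "length m \<le> tree_arity n" if "(w, m) \<in> set (outbox r (state t u))" for t u w m
    using mem_outboxD[OF that] by simp
  ultimately show ?thesis
    unfolding cap_1_eq_tree_arity a_gsend_run a_out_run using accepted_at_final_iff by auto
qed

theorem proposition35:
  shows "\<exists>(c::nat) (f::nat \<Rightarrow> nat).
     (\<lambda>n. real (f n)) \<in> O(\<lambda>n. ln (real n) / ln (ln (real n))) \<and>
     (\<forall>r::nat. \<exists>A::hybrid_alg. \<forall>n E adv.
        simple_graph n E \<longrightarrow> valid_adv (cap c n) adv \<longrightarrow>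
          (\<forall>t. \<forall>u\<in>{1..n}.
              length (a_gsend A (run A n E adv t u)) \<le> cap c n \<and>
              (\<forall>(w, m) \<in> set (a_gsend A (run A n E adv t u)). length m \<le> cap c n)) \<and>
          (\<forall>v\<in>{1..n}.
              a_out A (run A n E adv ((r - 1) div 2 + f n) v) = Some (has_cycle n E r)))"
proof (intro exI[of _ 1] exI[of _ "\<lambda>n. 2 * tree_depth n"] conjI allI)
  show "(\<lambda>n. real (2 * tree_depth n)) \<in> O(\<lambda>n. ln (real n) / ln (ln (real n)))"
    using tree_depth_bigo by simp
qed (intro exI allI impI, erule (1) detector_correct)

end
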